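(* Let $\mathfrak g=\mathrm{span}_{i\mathbb R}\tilde{\mathfrak g}\subseteq\mathfrak{su}(2^n)$ be a Lie algebra spanned by $i$ times the Pauli strings in a set $\tilde{\mathfrak g}$, and let $b_1\ne b_2$ be two commuting Pauli strings in $\tilde{\mathfrak g}$ that lie in the same connected component of the frustration graph of $\mathfrak g$. Then their distance in the frustration graph is $2$; i.e. there exists a Pauli string $g\in\tilde{\mathfrak g}$ with $[g,b_1]\ne0$ and $[g,b_2]\ne0$.
   Context: Pauli strings on $n$ qubits are tensor products of $I,X,Y,Z$, not all identity; two Pauli strings either commute or anticommute. It is assumed that every Pauli string $\sigma$ with $i\sigma\in\mathfrak g$ belongs to $\tilde{\mathfrak g}$ (Pauli strings are considered up to sign/phase). The frustration graph of $\mathfrak g$ has vertex set $\tilde{\mathfrak g}$ and an edge between $\sigma,\tau$ iff $[\sigma,\tau]\neq0$. *)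

theory Defs
  imports "Jordan_Normal_Form.Matrix"
begin

datatype pauli = PI | PX | PY | PZ

fun pauli_entry :: "pauli \<Rightarrow> nat \<Rightarrow> nat \<Rightarrow> complex" where
  "pauli_entry PI a b = (if a = b then 1 else 0)"
| "pauli_entry PX a b = (if a \<noteq> b then 1 else 0)"
| "pauli_entry PY a b = (if a = b then 0 else if a = 0 then - \<i> else \<i>)"
| "pauli_entry PZ a b = (if a \<noteq> b then 0 else if a = 0 then 1 else -1)"

definition bit_of :: "nat \<Rightarrow> nat \<Rightarrow> nat" where
  "bit_of r j = (r div 2 ^ j) mod 2"

text \<open>The 2^n x 2^n matrix of a Pauli string (tensor product of its letters).\<close>
definition pmat :: "nat \<Rightarrow> pauli list \<Rightarrow> complex mat" where
  "pmat n \<sigma> = mat (2 ^ n) (2 ^ n)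
     (\<lambda>(r, c). \<Prod>j<n. pauli_entry (\<sigma> ! j) (bit_of r j) (bit_of c j))"

text \<open>Pauli strings on n qubits (not all identity), phase-free representatives.\<close>
definition pauli_strings :: "nat \<Rightarrow> pauli list set" where
  "pauli_strings n = {\<sigma>. length \<sigma> = n \<and> (\<exists>p \<in> set \<sigma>. p \<noteq> PI)}"

inductive_set lspan :: "nat \<Rightarrow> pauli list set \<Rightarrow> complex mat set" for n G where
  gen: "\<sigma> \<in> G \<Longrightarrow> \<i> \<cdot>\<^sub>m pmat n \<sigma> \<in> lspan n G"
| zero: "0\<^sub>m (2 ^ n) (2 ^ n) \<in> lspan n G"
| add: "A \<in> lspan n G \<Longrightarrow> B \<in> lspan n G \<Longrightarrow> A + B \<in> lspan n G"
| scale: "A \<in> lspan n G \<Longrightarrow> complex_of_real r \<cdot>\<^sub>m A \<in> lspan n G"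

definition pcommute :: "nat \<Rightarrow> pauli list \<Rightarrow> pauli list \<Rightarrow> bool" where
  "pcommute n \<sigma> \<tau> \<longleftrightarrow> pmat n \<sigma> * pmat n \<tau> = pmat n \<tau> * pmat n \<sigma>"

definition frust_edges :: "nat \<Rightarrow> pauli list set \<Rightarrow> (pauli list \<times> pauli list) set" where
  "frust_edges n G = {(\<sigma>, \<tau>). \<sigma> \<in> G \<and> \<tau> \<in> G \<and> \<not> pcommute n \<sigma> \<tau>}"

end

theory Submission
  imports Defs
begin

text \<open>If u and v are anticommuting strings of G, then [iu, iv] = \<plusminus>2i uv, so (up to phase) the
  product uv is again a string of G; and a string x anticommutes with uv iff it anticommutes with
  exactly one of u and v. Hence on a walk a - v1 - v2 - v3 of the frustration graph, either a - v2
  or v1 - v3 is an edge, or v1 v2 is adjacent to both a and v3. Every walk of length three thus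
  shortens to one of length two, so vertices of a common component are at distance at most 2,
  and distinct commuting vertices, not being adjacent, are at distance exactly 2.\<close>

text \<open>The multiplication table of the Pauli matrices:
  \<sigma>(p) \<sigma>(q) = pauli_phase p q \<cdot> \<sigma>(pauli_mult p q).\<close>

fun pauli_mult :: "pauli \<Rightarrow> pauli \<Rightarrow> pauli" where
  "pauli_mult PI q = q"
| "pauli_mult p PI = p"
| "pauli_mult PX PX = PI" | "pauli_mult PY PY = PI" | "pauli_mult PZ PZ = PI"
| "pauli_mult PX PY = PZ" | "pauli_mult PY PX = PZ"
| "pauli_mult PY PZ = PX" | "pauli_mult PZ PY = PX"
| "pauli_mult PZ PX = PY" | "pauli_mult PX PZ = PY"

fun pauli_phase :: "pauli \<Rightarrow> pauli \<Rightarrow> complex" where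
  "pauli_phase PX PY = \<i>" | "pauli_phase PY PX = - \<i>"
| "pauli_phase PY PZ = \<i>" | "pauli_phase PZ PY = - \<i>"
| "pauli_phase PZ PX = \<i>" | "pauli_phase PX PZ = - \<i>"
| "pauli_phase p q = 1"

definition pauli_comm_sign :: "pauli \<Rightarrow> pauli \<Rightarrow> complex" where
  "pauli_comm_sign p q = (if p = PI \<or> q = PI \<or> p = q then 1 else -1)"

lemma pauli_entry_mult:
  assumes "a < 2" "c < 2"
  shows "pauli_entry p a 0 * pauli_entry q 0 c + pauli_entry p a 1 * pauli_entry q 1 c
       = pauli_phase p q * pauli_entry (pauli_mult p q) a c"
proof -
  have "a = 0 \<or> a = 1" "c = 0 \<or> c = 1" using assms by auto
  then show ?thesis by (cases p; cases q; auto)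
qed

lemma pauli_mult_eq_PI_iff: "pauli_mult p q = PI \<longleftrightarrow> p = q"
  by (cases p; cases q; simp)

lemma pauli_mult_self [simp]: "pauli_mult p p = PI"
  by (cases p; simp)

lemma pauli_mult_commute: "pauli_mult q p = pauli_mult p q"
  by (cases p; cases q; simp)

lemma pauli_phase_self: "pauli_phase p p = 1"
  by (cases p; simp)

lemma pauli_phase_mult_swap: "pauli_phase p q * pauli_phase q p = 1"
  by (cases p; cases q; simp)

lemma pauli_phase_swap: "pauli_phase q p = pauli_comm_sign p q * pauli_phase p q"
  by (cases p; cases q; simp add: pauli_comm_sign_def)

lemma pauli_comm_sign_cases: "pauli_comm_sign p q = 1 \<or> pauli_comm_sign p q = -1"
  by (simp add: pauli_comm_sign_def)

lemma pauli_comm_sign_mult: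
  "pauli_comm_sign p (pauli_mult q r) = pauli_comm_sign p q * pauli_comm_sign p r"
  by (cases p; cases q; cases r; simp add: pauli_comm_sign_def)

lemma bit_of_lt_2: "bit_of r j < 2"
  by (simp add: bit_of_def)

lemma bit_of_eq_iff_bit: "bit_of r j = bit_of c j \<longleftrightarrow> (bit r j \<longleftrightarrow> bit c j)"
  by (simp add: bit_of_def bit_iff_odd mod2_eq_if)

lemma bit_of_inject:
  assumes "r < 2 ^ n" "c < 2 ^ n" "\<forall>j<n. bit_of r j = bit_of c j"
  shows "r = c"
proof -
  have "take_bit n r = take_bit n c"
    using assms(3) by (intro bit_eqI) (auto simp: bit_take_bit_iff bit_of_eq_iff_bit)
  then show ?thesis using assms(1,2) by (simp add: take_bit_nat_eq_self)
qed

lemma bit_of_add_double_Suc: "bit_of (b + 2 * k) (Suc j) = bit_of k j" if "b < 2"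
  using that by (simp add: bit_of_def div_mult2_eq)

lemma bit_of_add_double_0: "bit_of (b + 2 * k) 0 = b" if "b < 2"
  using that by (simp add: bit_of_def)

lemma sum_lessThan_double:
  "(\<Sum>k<2 * m. f k) = (\<Sum>k<m. f (2 * k) + f (Suc (2 * k)) :: 'a :: comm_monoid_add)"
  by (induction m) (simp_all add: sum.distrib ac_simps)

lemma sum_prod_bit_of:
  "(\<Sum>k<2 ^ n. \<Prod>j<n. g j (bit_of k j)) = (\<Prod>j<n. g j 0 + g j (1 :: nat) :: 'a :: comm_semiring_1)"
proof (induction n arbitrary: g)
  case 0
  then show ?case by simp
next
  case (Suc n)
  have split: "(\<Prod>j<Suc n. g j (bit_of (b + 2 * k) j)) = g 0 b * (\<Prod>j<n. g (Suc j) (bit_of k j))"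
    if "b < 2" for b k
    by (simp only: prod.lessThan_Suc_shift) (simp add: bit_of_add_double_Suc bit_of_add_double_0 that)
  have "(\<Sum>k<2 ^ Suc n. \<Prod>j<Suc n. g j (bit_of k j))
      = (\<Sum>k<2 ^ n. (g 0 0 + g 0 1) * (\<Prod>j<n. g (Suc j) (bit_of k j)))"
    using split[of 0] split[of 1] by (simp add: sum_lessThan_double algebra_simps)
  also have "\<dots> = (g 0 0 + g 0 1) * (\<Prod>j<n. g (Suc j) 0 + g (Suc j) 1)"
    using Suc[of "\<lambda>j. g (Suc j)"] by (simp add: sum_distrib_left[symmetric])
  also have "\<dots> = (\<Prod>j<Suc n. g j 0 + g j 1)"
    by (rule prod.lessThan_Suc_shift[symmetric])
  finally show ?case .
qed

definition pstring_mult :: "nat \<Rightarrow> pauli list \<Rightarrow> pauli list \<Rightarrow> pauli list" where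
  "pstring_mult n s t = map (\<lambda>j. pauli_mult (s ! j) (t ! j)) [0..<n]"

definition pstring_phase :: "nat \<Rightarrow> pauli list \<Rightarrow> pauli list \<Rightarrow> complex" where
  "pstring_phase n s t = (\<Prod>j<n. pauli_phase (s ! j) (t ! j))"

definition pstring_comm_sign :: "nat \<Rightarrow> pauli list \<Rightarrow> pauli list \<Rightarrow> complex" where
  "pstring_comm_sign n s t = (\<Prod>j<n. pauli_comm_sign (s ! j) (t ! j))"

lemma length_pstring_mult [simp]: "length (pstring_mult n s t) = n"
  by (simp add: pstring_mult_def)

lemma nth_pstring_mult [simp]: "j < n \<Longrightarrow> pstring_mult n s t ! j = pauli_mult (s ! j) (t ! j)"
  by (simp add: pstring_mult_def)

lemma pmat_carrier [simp]: "pmat n s \<in> carrier_mat (2 ^ n) (2 ^ n)"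
  by (simp add: pmat_def)

lemma dim_pmat [simp]: "dim_row (pmat n s) = 2 ^ n" "dim_col (pmat n s) = 2 ^ n"
  by (simp_all add: pmat_def)

lemma index_pmat:
  "r < 2 ^ n \<Longrightarrow> c < 2 ^ n \<Longrightarrow>
     pmat n s $$ (r, c) = (\<Prod>j<n. pauli_entry (s ! j) (bit_of r j) (bit_of c j))"
  by (simp add: pmat_def)

lemma pmat_mult: "pmat n s * pmat n t = pstring_phase n s t \<cdot>\<^sub>m pmat n (pstring_mult n s t)"
proof (rule eq_matI)
  fix r c
  assume "r < dim_row (pstring_phase n s t \<cdot>\<^sub>m pmat n (pstring_mult n s t))"
    and "c < dim_col (pstring_phase n s t \<cdot>\<^sub>m pmat n (pstring_mult n s t))"
  then have r: "r < 2 ^ n" and c: "c < 2 ^ n" by (simp_all add: pmat_def)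
  have "(pmat n s * pmat n t) $$ (r, c) = (\<Sum>k<2 ^ n. pmat n s $$ (r, k) * pmat n t $$ (k, c))"
    using r c by (simp add: scalar_prod_def atLeast0LessThan)
  also have "\<dots> = (\<Sum>k<2 ^ n. \<Prod>j<n. pauli_entry (s ! j) (bit_of r j) (bit_of k j)
                            * pauli_entry (t ! j) (bit_of k j) (bit_of c j))"
    using r c by (intro sum.cong) (simp_all add: index_pmat prod.distrib)
  also have "\<dots> = (\<Prod>j<n. pauli_entry (s ! j) (bit_of r j) 0 * pauli_entry (t ! j) 0 (bit_of c j)
                       + pauli_entry (s ! j) (bit_of r j) 1 * pauli_entry (t ! j) 1 (bit_of c j))"
    by (rule sum_prod_bit_of)
  also have "\<dots> = (\<Prod>j<n. pauli_phase (s ! j) (t ! j)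
                       * pauli_entry (pauli_mult (s ! j) (t ! j)) (bit_of r j) (bit_of c j))"
    by (intro prod.cong refl pauli_entry_mult bit_of_lt_2)
  also have "\<dots> = (pstring_phase n s t \<cdot>\<^sub>m pmat n (pstring_mult n s t)) $$ (r, c)"
    using r c by (simp add: pstring_phase_def index_pmat prod.distrib)
  finally show "(pmat n s * pmat n t) $$ (r, c) = \<dots>" .
qed (simp_all add: pmat_def)

lemma pmat_replicate_PI: "pmat n (replicate n PI) = 1\<^sub>m (2 ^ n)"
proof (rule eq_matI)
  fix r c assume "r < dim_row (1\<^sub>m (2 ^ n) :: complex mat)" "c < dim_col (1\<^sub>m (2 ^ n) :: complex mat)"
  then have r: "r < 2 ^ n" and c: "c < 2 ^ n" by simp_all
  have entry: "pmat n (replicate n PI) $$ (r, c) = (\<Prod>j<n. if bit_of r j = bit_of c j then 1 else 0)"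
    using r c by (simp add: index_pmat)
  show "pmat n (replicate n PI) $$ (r, c) = 1\<^sub>m (2 ^ n) $$ (r, c)"
  proof (cases "\<forall>j<n. bit_of r j = bit_of c j")
    case True
    then show ?thesis using entry r c bit_of_inject[OF r c] by simp
  next
    case False
    then have "r \<noteq> c" by blast
    with False show ?thesis using entry r c by (auto simp: prod_zero_iff)
  qed
qed (simp_all add: pmat_def)

lemma smult_one_mat [simp]: "(1 :: 'a :: monoid_mult) \<cdot>\<^sub>m A = A"
  by (rule eq_matI) auto

lemma smult_minus_one_fixpoint_eq_zero:
  assumes "A = (-1 :: complex) \<cdot>\<^sub>m A"
  shows "A = 0\<^sub>m (dim_row A) (dim_col A)"
proof (rule eq_matI)
  fix i j assume "i < dim_row (0\<^sub>m (dim_row A) (dim_col A) :: complex mat)"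
    and "j < dim_col (0\<^sub>m (dim_row A) (dim_col A) :: complex mat)"
  then have "A $$ (i, j) = - A $$ (i, j)"
    using arg_cong[OF assms, of "\<lambda>M. M $$ (i, j)"] by simp
  then show "A $$ (i, j) = 0\<^sub>m (dim_row A) (dim_col A) $$ (i, j)"
    using \<open>i < _\<close> \<open>j < _\<close> by simp
qed simp_all

lemma pmat_square: "pmat n s * pmat n s = 1\<^sub>m (2 ^ n)"
proof -
  have "pstring_mult n s s = replicate n PI"
    by (simp add: pstring_mult_def map_replicate_const)
  moreover have "pstring_phase n s s = 1"
    by (simp add: pstring_phase_def pauli_phase_self)
  ultimately show ?thesis
    by (simp add: pmat_mult pmat_replicate_PI)
qed

lemma pstring_mult_commute: "pstring_mult n t s = pstring_mult n s t"
  unfolding pstring_mult_def by (intro map_cong refl pauli_mult_commute)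

lemma pstring_phase_swap: "pstring_phase n t s = pstring_comm_sign n s t * pstring_phase n s t"
  unfolding pstring_phase_def pstring_comm_sign_def prod.distrib[symmetric]
  by (intro prod.cong refl pauli_phase_swap)

lemma pmat_mult_swap: "pmat n t * pmat n s = pstring_comm_sign n s t \<cdot>\<^sub>m (pmat n s * pmat n t)"
  by (auto simp: pmat_mult pstring_mult_commute[of n t s] pstring_phase_swap[of n t s])

lemma pstring_comm_sign_cases: "pstring_comm_sign n s t = 1 \<or> pstring_comm_sign n s t = -1"
  unfolding pstring_comm_sign_def
proof (induction n)
  case (Suc n)
  then show ?case
    using pauli_comm_sign_cases[of "s ! n" "t ! n"] by auto
qed simp

lemma pmat_neq_zero: "pmat n s \<noteq> 0\<^sub>m (2 ^ n) (2 ^ n)"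
proof
  assume "pmat n s = 0\<^sub>m (2 ^ n) (2 ^ n)"
  then have "1\<^sub>m (2 ^ n) = (0\<^sub>m (2 ^ n) (2 ^ n) :: complex mat)"
    using pmat_square[of n s] by simp
  then have "1\<^sub>m (2 ^ n) $$ (0, 0) = (0\<^sub>m (2 ^ n) (2 ^ n) :: complex mat) $$ (0, 0)"
    by simp
  then show False by simp
qed

lemma pcommute_commute: "pcommute n s t \<longleftrightarrow> pcommute n t s"
  by (auto simp: pcommute_def)

lemma pcommute_iff_comm_sign: "pcommute n s t \<longleftrightarrow> pstring_comm_sign n s t = 1"
proof
  assume "pstring_comm_sign n s t = 1"
  then show "pcommute n s t"
    by (simp add: pcommute_def pmat_mult_swap[of n t s])
next
  assume comm: "pcommute n s t"
  show "pstring_comm_sign n s t = 1"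
  proof (rule ccontr)
    let ?X = "pmat n s * pmat n t"
    assume "pstring_comm_sign n s t \<noteq> 1"
    then have "?X = (-1) \<cdot>\<^sub>m ?X"
      using comm pstring_comm_sign_cases[of n s t] by (simp add: pcommute_def pmat_mult_swap[of n t s])
    then have "?X = 0\<^sub>m (2 ^ n) (2 ^ n)"
      using smult_minus_one_fixpoint_eq_zero[of ?X] by simp
    then have "pmat n s * ?X = 0\<^sub>m (2 ^ n) (2 ^ n)"
      by simp
    moreover have "pmat n s * ?X = pmat n t"
      using assoc_mult_mat[OF pmat_carrier pmat_carrier pmat_carrier, of n s s t]
      by (simp add: pmat_square)
    ultimately show False
      using pmat_neq_zero by metis
  qed
qed

lemma pmat_anticommute_if_not_pcommute:
  assumes "\<not> pcommute n s t"
  shows "pmat n t * pmat n s = - (pmat n s * pmat n t)"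
proof -
  have "pstring_comm_sign n s t = -1"
    using assms pstring_comm_sign_cases pcommute_iff_comm_sign by metis
  then show ?thesis
    by (intro eq_matI) (simp_all add: pmat_mult_swap[of n t s])
qed

lemma pcommute_pstring_mult_iff:
  "pcommute n a (pstring_mult n s t) \<longleftrightarrow> (pcommute n a s \<longleftrightarrow> pcommute n a t)"
proof -
  have "pstring_comm_sign n a (pstring_mult n s t) = pstring_comm_sign n a s * pstring_comm_sign n a t"
    unfolding pstring_comm_sign_def prod.distrib[symmetric]
    by (intro prod.cong) (simp_all add: pauli_comm_sign_mult)
  then show ?thesis
    using pstring_comm_sign_cases[of n a s] pstring_comm_sign_cases[of n a t]
    by (auto simp: pcommute_iff_comm_sign)
qed

lemma pstring_phase_if_not_pcommute:
  assumes "\<not> pcommute n s t"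
  shows "pstring_phase n s t = \<i> \<or> pstring_phase n s t = - \<i>"
proof -
  have "pstring_phase n s t * pstring_phase n t s = 1"
    unfolding pstring_phase_def prod.distrib[symmetric] by (simp add: pauli_phase_mult_swap)
  moreover have "pstring_comm_sign n s t = -1"
    using assms pstring_comm_sign_cases pcommute_iff_comm_sign by metis
  ultimately have "(pstring_phase n s t)\<^sup>2 = \<i>\<^sup>2"
    by (simp add: pstring_phase_swap[of n t s] power2_eq_square minus_equation_iff)
  then show ?thesis
    using power2_eq_iff[of "pstring_phase n s t" \<i>] by simp
qed

lemma pstring_mult_in_pauli_strings:
  assumes "length s = n" "length t = n" "s \<noteq> t"
  shows "pstring_mult n s t \<in> pauli_strings n"
proof -
  obtain j where j: "j < n" "s ! j \<noteq> t ! j"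
    using assms nth_equalityI by metis
  then have "pstring_mult n s t ! j \<noteq> PI"
    by (simp add: pauli_mult_eq_PI_iff)
  then show ?thesis
    using j nth_mem[of j "pstring_mult n s t"] by (auto simp: pauli_strings_def)
qed

lemma smult_mult_smult_mat:
  assumes "A \<in> carrier_mat nr m" "B \<in> carrier_mat m nc"
  shows "(a \<cdot>\<^sub>m A) * (b \<cdot>\<^sub>m B) = (a * b :: 'a :: comm_semiring_0) \<cdot>\<^sub>m (A * B)"
proof -
  have "(a \<cdot>\<^sub>m A) * (b \<cdot>\<^sub>m B) = a \<cdot>\<^sub>m (A * (b \<cdot>\<^sub>m B))"
    using assms by (intro mult_smult_assoc_mat) auto
  also have "\<dots> = a \<cdot>\<^sub>m (b \<cdot>\<^sub>m (A * B))"
    using assms by (simp add: mult_smult_distrib)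
  also have "\<dots> = (a * b) \<cdot>\<^sub>m (A * B)"
    by (rule eq_matI) (auto simp: mult.assoc)
  finally show ?thesis .
qed

lemma pstring_mult_in_lie_algebra:
  assumes G_sub: "G \<subseteq> pauli_strings n"
    and lie: "\<forall>A \<in> lspan n G. \<forall>B \<in> lspan n G. A * B - B * A \<in> lspan n G"
    and complete: "\<forall>\<sigma> \<in> pauli_strings n. \<i> \<cdot>\<^sub>m pmat n \<sigma> \<in> lspan n G \<longrightarrow> \<sigma> \<in> G"
    and s: "s \<in> G" and t: "t \<in> G" and anti: "\<not> pcommute n s t"
  shows "pstring_mult n s t \<in> G"
proof -
  let ?c = "pstring_phase n s t" and ?R = "pmat n (pstring_mult n s t)"
  let ?A = "\<i> \<cdot>\<^sub>m pmat n s" and ?B = "\<i> \<cdot>\<^sub>m pmat n t"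
  have ST: "pmat n s * pmat n t = ?c \<cdot>\<^sub>m ?R"
    by (rule pmat_mult)
  have TS: "pmat n t * pmat n s = - (?c \<cdot>\<^sub>m ?R)"
    using pmat_anticommute_if_not_pcommute[OF anti] unfolding ST .
  have "?A * ?B - ?B * ?A = (\<i> * \<i>) \<cdot>\<^sub>m (pmat n s * pmat n t) - (\<i> * \<i>) \<cdot>\<^sub>m (pmat n t * pmat n s)"
    by (simp only: smult_mult_smult_mat[OF pmat_carrier pmat_carrier])
  also have "\<dots> = (-2 * ?c) \<cdot>\<^sub>m ?R"
    unfolding ST TS by (rule eq_matI) auto
  finally have bracket: "?A * ?B - ?B * ?A = (-2 * ?c) \<cdot>\<^sub>m ?R" .
  define r :: real where "r = (if ?c = \<i> then -1/2 else 1/2)"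
  have "\<i> \<cdot>\<^sub>m ?R = complex_of_real r \<cdot>\<^sub>m (?A * ?B - ?B * ?A)"
    unfolding bracket r_def using pstring_phase_if_not_pcommute[OF anti]
    by (intro eq_matI) auto
  moreover have "?A * ?B - ?B * ?A \<in> lspan n G"
    using lie lspan.gen[OF s] lspan.gen[OF t] by blast
  ultimately have "\<i> \<cdot>\<^sub>m ?R \<in> lspan n G"
    by (metis lspan.scale)
  moreover have "pstring_mult n s t \<in> pauli_strings n"
  proof (rule pstring_mult_in_pauli_strings)
    show "length s = n" "length t = n"
      using G_sub s t by (auto simp: pauli_strings_def)
    show "s \<noteq> t"
      using anti by (auto simp: pcommute_def)
  qed
  ultimately show ?thesis
    using complete by blast
qed

lemma rtrancl_subset_Id_Un_relcomp:
  assumes "E O E O E \<subseteq> E O E"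
  shows "E\<^sup>* \<subseteq> Id \<union> E \<union> E O E"
proof (rule subrelI)
  fix a b assume "(a, b) \<in> E\<^sup>*"
  then show "(a, b) \<in> Id \<union> E \<union> E O E"
  proof (induction rule: rtrancl_induct)
    case (step y z)
    then show ?case using assms by blast
  qed simp
qed

lemma relcomp3_subset_relcomp2:
  assumes "sym E"
    and symdiff: "\<And>u v. (u, v) \<in> E \<Longrightarrow> \<exists>w. \<forall>x. (x, w) \<in> E \<longleftrightarrow> ((x, u) \<in> E \<longleftrightarrow> (x, v) \<notin> E)"
  shows "E O E O E \<subseteq> E O E"
proof (rule subrelI)
  fix a v3 assume "(a, v3) \<in> E O E O E"
  then obtain v1 v2 where av1: "(a, v1) \<in> E" and v12: "(v1, v2) \<in> E" and v23: "(v2, v3) \<in> E"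
    by blast
  show "(a, v3) \<in> E O E"
  proof (cases "(a, v2) \<in> E \<or> (v1, v3) \<in> E")
    case True
    then show ?thesis using av1 v23 by blast
  next
    case False
    obtain w where w: "\<And>x. (x, w) \<in> E \<longleftrightarrow> ((x, v1) \<in> E \<longleftrightarrow> (x, v2) \<notin> E)"
      using symdiff[OF v12] by blast
    have "(v3, v1) \<notin> E" "(v3, v2) \<in> E"
      using False v23 \<open>sym E\<close> by (auto dest: symD)
    then have "(w, v3) \<in> E"
      using w[of v3] \<open>sym E\<close> by (blast dest: symD)
    moreover have "(a, w) \<in> E"
      using w[of a] False av1 by blast
    ultimately show ?thesis by blast
  qed
qed

lemma sym_frust_edges: "sym (frust_edges n G)"
  by (auto simp: sym_def frust_edges_def pcommute_commute)

lemma frust_edges_pstring_mult: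
  assumes G_sub: "G \<subseteq> pauli_strings n"
    and lie: "\<forall>A \<in> lspan n G. \<forall>B \<in> lspan n G. A * B - B * A \<in> lspan n G"
    and complete: "\<forall>\<sigma> \<in> pauli_strings n. \<i> \<cdot>\<^sub>m pmat n \<sigma> \<in> lspan n G \<longrightarrow> \<sigma> \<in> G"
    and uv: "(u, v) \<in> frust_edges n G"
  shows "(x, pstring_mult n u v) \<in> frust_edges n G
           \<longleftrightarrow> ((x, u) \<in> frust_edges n G \<longleftrightarrow> (x, v) \<notin> frust_edges n G)"
proof -
  have "pstring_mult n u v \<in> G"
    using uv by (intro pstring_mult_in_lie_algebra[OF G_sub lie complete]) (auto simp: frust_edges_def)
  then show ?thesis
    using uv by (auto simp: frust_edges_def pcommute_pstring_mult_iff)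
qed

theorem theoremC1:
  fixes n :: nat and G :: "pauli list set" and b1 b2 :: "pauli list"
  assumes G_sub: "G \<subseteq> pauli_strings n"
    and lie: "\<forall>A \<in> lspan n G. \<forall>B \<in> lspan n G. A * B - B * A \<in> lspan n G"
    and complete: "\<forall>\<sigma> \<in> pauli_strings n. \<i> \<cdot>\<^sub>m pmat n \<sigma> \<in> lspan n G \<longrightarrow> \<sigma> \<in> G"
    and b1: "b1 \<in> G" and b2: "b2 \<in> G" and ne: "b1 \<noteq> b2"
    and comm: "pcommute n b1 b2"
    and conn: "(b1, b2) \<in> (frust_edges n G)\<^sup>*"
  shows "\<exists>g \<in> G. \<not> pcommute n g b1 \<and> \<not> pcommute n g b2"
proof -
  let ?E = "frust_edges n G"
  have "\<exists>w. \<forall>x. (x, w) \<in> ?E \<longleftrightarrow> ((x, u) \<in> ?E \<longleftrightarrow> (x, v) \<notin> ?E)" if "(u, v) \<in> ?E" for u v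
    using frust_edges_pstring_mult[OF G_sub lie complete that] by blast
  then have "?E O ?E O ?E \<subseteq> ?E O ?E"
    by (rule relcomp3_subset_relcomp2[OF sym_frust_edges])
  then have "(b1, b2) \<in> Id \<union> ?E \<union> ?E O ?E"
    using rtrancl_subset_Id_Un_relcomp conn by blast
  moreover have "(b1, b2) \<notin> ?E"
    using comm by (simp add: frust_edges_def)
  ultimately obtain g where "(b1, g) \<in> ?E" "(g, b2) \<in> ?E"
    using ne by blast
  then show ?thesis
    using pcommute_commute[of n g b1] by (auto simp: frust_edges_def)
qed

end
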